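(* Let $\mathbb F$ be a field, $d\ge1$, $\psi\in\mathbb F^d$, $j\ge 1$ an integer, $\mathcal B\subseteq[d]$ with $|\mathcal B|\le j-1$, $m=j-|\mathcal B|-1$, and $x\in[d]$. Let $\sigma_P\in\mathbb Z^d$ and let $\mathbf P$ be an arbitrary matrix over $\mathbb F$ with rows indexed by $[d]$ and columns indexed by $j$-subsets of $[d]$. Define $\sigma_Q\in\mathbb Z^d$ by $\sigma_Q(i)=1+\sigma_P(i)+\mathrm{ind}_{\mathcal B\cup\{i\}}(i)$. Let $\mathbf Q$ be a $(d;m)$ signed determinant message matrix with signature $\sigma_Q$, let $\mathbf\Delta$ be the injection matrix defined below, and $\bar{\mathbf Q}=\mathbf Q+\mathbf\Delta$. Then for every $m$-subset $\mathcal I\subseteq[d]$, $$\sum_{y=1}^d\psi_y\bar{\mathbf Q}_{y,\mathcal I}=\sum_{i\in\mathcal I}(-1)^{\sigma_Q(i)+\mathrm{ind}_{\mathcal I}(i)}\big[\bar{\mathbf Q}\,\Xi^{(m)}_{\sigma_Q,\psi}\big]_{i,\mathcal I\setminus\{i\}}-\mathbb 1\{\mathcal I\cap\mathcal B=\varnothing\}\,\big[\mathbf P\,\Xi^{(j)}_{\sigma_P,\psi}\big]_{x,\mathcal I\cup\mathcal B}.$$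
   Context: Notation: $[d]=\{1,\dots,d\}$; $\mathrm{ind}_{\mathcal I}(x)=|\{y\in\mathcal I:y\le x\}|$; $\max\varnothing=-\infty$. $(d;m)$ signed determinant message matrix with signature $\sigma$: choose values $v_{x,\mathcal X}\in\mathbb F$ for every $m$-subset $\mathcal X\subseteq[d]$ and $x\in\mathcal X$, and $w_{y,\mathcal Y}\in\mathbb F$ for every $(m+1)$-subset $\mathcal Y\subseteq[d]$ and $y\in\mathcal Y$, satisfying $\sum_{y\in\mathcal Y}(-1)^{\mathrm{ind}_{\mathcal Y}(y)}w_{y,\mathcal Y}=0$ for every such $\mathcal Y$. The matrix has rows $x\in[d]$, columns $m$-subsets $\mathcal I\subseteq[d]$, entries $(-1)^{\sigma(x)}v_{x,\mathcal I}$ if $x\in\mathcal I$ and $(-1)^{\sigma(x)}w_{x,\mathcal I\cup\{x\}}$ if $x\notin\mathcal I$ (for $m=0$ it is the all-zero $d\times1$ matrix with column $\varnothing$). Repair-encoder matrix $\Xi^{(m)}_{\sigma,\psi}$: rows $m$-subsets $\mathcal I$, columns $(m-1)$-subsets $\mathcal J$ of $[d]$, entry $(-1)^{\sigma(y)+\mathrm{ind}_{\mathcal I}(y)}\psi_y$ if $\mathcal J\subseteq\mathcal I$, $\mathcal I\setminus\mathcal J=\{y\}$, and $0$ otherwise (for $m=0$ it has no columns). Injection matrix $\mathbf\Delta$: rows $i\in[d]$, columns $m$-subsets $\mathcal I\subseteq[d]$, with $\mathbf\Delta_{i,\mathcal I}=(-1)^{1+\sigma_P(i)+\mathrm{ind}_{\mathcal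 I\cup\{i\}\cup\mathcal B}(i)}\,\mathbf P_{x,\mathcal I\cup\{i\}\cup\mathcal B}$ if $i>\max\mathcal I$, $i\notin\mathcal B$ and $\mathcal I\cap\mathcal B=\varnothing$, and $\mathbf\Delta_{i,\mathcal I}=0$ otherwise. *)

theory Defs
  imports Main
begin

definition ksubsets :: "nat \<Rightarrow> nat \<Rightarrow> nat set set" where
  "ksubsets d k = {I. I \<subseteq> {1..d} \<and> card I = k}"

definition ind :: "nat set \<Rightarrow> nat \<Rightarrow> nat" where
  "ind I x = card {y \<in> I. y \<le> x}"

definition signpow :: "int \<Rightarrow> 'a::field" where
  "signpow k = (if even k then 1 else -1)"

(* Matrices: rows indexed by elements of [d] (or by subsets), columns by subsets.
   Product of A (columns indexed by k-subsets of [d]) with M (rows indexed by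
   k-subsets of [d]). *)
definition matmul_sub :: "nat \<Rightarrow> nat \<Rightarrow> ('r \<Rightarrow> nat set \<Rightarrow> 'a::field)
     \<Rightarrow> (nat set \<Rightarrow> 'c \<Rightarrow> 'a) \<Rightarrow> 'r \<Rightarrow> 'c \<Rightarrow> 'a" where
  "matmul_sub d k A M r c = (\<Sum>K\<in>ksubsets d k. A r K * M K c)"

definition sdmm :: "nat \<Rightarrow> nat \<Rightarrow> (nat \<Rightarrow> int) \<Rightarrow> (nat \<Rightarrow> nat set \<Rightarrow> 'a::field) \<Rightarrow> bool" where
  "sdmm d m \<sigma> Q \<longleftrightarrow>
     (\<exists>v w :: nat \<Rightarrow> nat set \<Rightarrow> 'a.
        (\<forall>Y\<in>ksubsets d (m+1). (\<Sum>y\<in>Y. signpow (int (ind Y y)) * w y Y) = 0) \<and>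
        (\<forall>x\<in>{1..d}. \<forall>I\<in>ksubsets d m.
           Q x I = (if x \<in> I then signpow (\<sigma> x) * v x I
                    else signpow (\<sigma> x) * w x (I \<union> {x}))))"

(* Repair-encoder matrix Xi^{(m)}_{sigma,psi}: entry at row I (m-subset), column J
   ((m-1)-subset); the row/column ranges are imposed by matmul_sub and by the
   column indices at which it is evaluated. *)
definition repair_enc :: "(nat \<Rightarrow> int) \<Rightarrow> (nat \<Rightarrow> 'a::field) \<Rightarrow> nat set \<Rightarrow> nat set \<Rightarrow> 'a" where
  "repair_enc \<sigma> \<psi> I J =
     (if J \<subseteq> I \<and> card (I - J) = 1
      then (let y = the_elem (I - J) in signpow (\<sigma> y + int (ind I y)) * \<psi> y)
      else 0)"

(* Injection matrix Delta (rows i, columns m-subsets I); "i > max I" with max {} = -infinity *)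
definition injection :: "(nat \<Rightarrow> int) \<Rightarrow> (nat \<Rightarrow> nat set \<Rightarrow> 'a::field) \<Rightarrow> nat \<Rightarrow> nat set
     \<Rightarrow> nat \<Rightarrow> nat set \<Rightarrow> 'a" where
  "injection \<sigma>P P x B i I =
     (if (\<forall>a\<in>I. a < i) \<and> i \<notin> B \<and> I \<inter> B = {}
      then signpow (1 + \<sigma>P i + int (ind (I \<union> {i} \<union> B) i)) * P x (I \<union> {i} \<union> B)
      else 0)"

end

theory Submission imports Defs begin

text \<open>Expanding the entry \<open>[F \<Xi>] i (I - {i})\<close> for \<open>i \<in> I\<close> gives the diagonal term
  \<open>\<psi> i * F i I\<close> plus exchange terms, in which \<open>i\<close> is traded for some \<open>y \<notin> I\<close>; the
  identity is linear in \<open>F\<close> and can be checked for each \<open>y\<close> separately. For the message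
  matrix \<open>Q\<close> the vanishing alternating sums of the \<open>w\<close>-values make the exchange terms at
  \<open>y\<close> add up to \<open>\<psi> y * Q y I\<close>. The injection matrix is supported on columns lying below
  the row index, so at most one exchange term survives (trading the maximum of \<open>I\<close>, or none
  if \<open>y > Max I\<close>); together with \<open>\<psi> y * \<Delta> y I\<close> it is the summand of
  \<open>[P \<Xi>] x (I \<union> B)\<close> at the column \<open>I \<union> B \<union> {y}\<close>, and the choice of \<open>\<sigma>Q\<close> is exactly
  what makes the signs agree.\<close>

lemma signpow_add: "(signpow (a + b) :: 'a::field) = signpow a * signpow b"
  unfolding signpow_def by auto

lemma signpow_mult_self [simp]: "(signpow a :: 'a::field) * signpow a = 1"
  unfolding signpow_def by auto

lemma signpow_eq_if_even_diff: "even (a - b) \<Longrightarrow> (signpow a :: 'a::field) = signpow b"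
  unfolding signpow_def by (auto simp: even_diff)

lemma signpow_eq_neg_if_odd_diff: "odd (a - b) \<Longrightarrow> (signpow a :: 'a::field) = - signpow b"
  unfolding signpow_def by (auto simp: even_diff)

lemma ind_insert:
  assumes "finite A" "y \<notin> A"
  shows "ind (insert y A) z = ind A z + (if y \<le> z then 1 else 0)"
proof -
  have "{u \<in> insert y A. u \<le> z} = (if y \<le> z then insert y {u \<in> A. u \<le> z} else {u \<in> A. u \<le> z})"
    by auto
  then show ?thesis using assms unfolding ind_def by simp
qed

lemma ind_Un_disjoint:
  assumes "finite A" "finite C" "A \<inter> C = {}"
  shows "ind (A \<union> C) z = ind A z + ind C z"
proof -
  have "{u \<in> A \<union> C. u \<le> z} = {u \<in> A. u \<le> z} \<union> {u \<in> C. u \<le> z}" by auto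
  moreover have "card ({u \<in> A. u \<le> z} \<union> {u \<in> C. u \<le> z}) = card {u \<in> A. u \<le> z} + card {u \<in> C. u \<le> z}"
    by (rule card_Un_disjoint) (use assms in auto)
  ultimately show ?thesis unfolding ind_def by simp
qed

lemma ind_eq_card: "\<forall>a\<in>A. a \<le> z \<Longrightarrow> ind A z = card A"
  unfolding ind_def by (metis (no_types, lifting) Collect_cong Collect_mem_eq)

text \<open>Moving \<open>i\<close> out of \<open>I\<close> and \<open>y\<close> in changes the positions of \<open>i\<close>
  and \<open>y\<close> by an odd total amount, because exactly one of \<open>i \<le> y\<close> and
  \<open>y \<le> i\<close> holds.\<close>
lemma odd_ind_exchange:
  assumes "finite I" "i \<in> I" "y \<notin> I"
  shows "odd (ind I i + ind (insert y (I - {i})) y + ind (insert y I) y + ind (insert y I) i)"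
proof -
  have I: "I = insert i (I - {i})" using assms(2) by auto
  have fin: "finite (I - {i})" and y: "y \<notin> I - {i}" and i: "i \<notin> I - {i}"
    using assms by auto
  have "ind I i = ind (I - {i}) i + 1"
    by (subst I, subst ind_insert[OF fin i]) simp
  moreover have "ind (insert y I) y = ind (I - {i}) y + (if i \<le> y then 1 else 0) + 1"
    by (subst ind_insert[OF assms(1,3)], subst I, subst ind_insert[OF fin i]) simp
  moreover have "ind (insert y I) i = ind (I - {i}) i + 1 + (if y \<le> i then 1 else 0)"
    by (subst ind_insert[OF assms(1,3)], subst I, subst ind_insert[OF fin i]) simp
  moreover have "ind (insert y (I - {i})) y = ind (I - {i}) y + 1"
    using ind_insert[OF fin y] by simp
  moreover have "i \<noteq> y" using assms by auto
  ultimately show ?thesis by auto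
qed

lemma finite_ksubsets: "finite (ksubsets d k)"
  unfolding ksubsets_def by (rule finite_subset[of _ "Pow {1..d}"]) auto

lemma matmul_sub_repair_enc:
  assumes J: "J \<subseteq> {1..d}" and k: "card J + 1 = k"
  shows "matmul_sub d k F (repair_enc \<sigma> \<psi>) r J
    = (\<Sum>y\<in>{1..d} - J. F r (insert y J) * (signpow (\<sigma> y + int (ind (insert y J) y)) * \<psi> y))"
proof -
  have finJ: "finite J" using J finite_subset by blast
  let ?S = "(\<lambda>y. insert y J) ` ({1..d} - J)"
  have S: "?S \<subseteq> ksubsets d k" using J k finJ by (auto simp: ksubsets_def)
  have zero: "repair_enc \<sigma> \<psi> K J = 0" if "K \<in> ksubsets d k - ?S" for K
  proof (rule ccontr)
    assume "repair_enc \<sigma> \<psi> K J \<noteq> 0"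
    then have c: "J \<subseteq> K" "card (K - J) = 1" unfolding repair_enc_def by (auto split: if_splits)
    then obtain y where y: "K - J = {y}" by (meson card_1_singletonE)
    then have "K = insert y J" using c by auto
    moreover have "y \<in> {1..d} - J" using y that by (auto simp: ksubsets_def)
    ultimately show False using that by auto
  qed
  have "matmul_sub d k F (repair_enc \<sigma> \<psi>) r J = (\<Sum>K\<in>?S. F r K * repair_enc \<sigma> \<psi> K J)"
    unfolding matmul_sub_def
    by (rule sum.mono_neutral_right[OF finite_ksubsets S]) (use zero in auto)
  also have "\<dots> = (\<Sum>y\<in>{1..d} - J. F r (insert y J) * repair_enc \<sigma> \<psi> (insert y J) J)"
    by (rule sum.reindex_cong[where l="\<lambda>y. insert y J"]) (auto simp: inj_on_def)
  also have "\<dots> = (\<Sum>y\<in>{1..d} - J. F r (insert y J) * (signpow (\<sigma> y + int (ind (insert y J) y)) * \<psi> y))"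
  proof (rule sum.cong)
    fix y assume "y \<in> {1..d} - J"
    then have "insert y J - J = {y}" by auto
    then show "F r (insert y J) * repair_enc \<sigma> \<psi> (insert y J) J
        = F r (insert y J) * (signpow (\<sigma> y + int (ind (insert y J) y)) * \<psi> y)"
      unfolding repair_enc_def by (simp add: subset_insertI)
  qed simp
  finally show ?thesis .
qed

text \<open>The coefficient of \<open>F i (insert y (I - {i}))\<close> in the \<open>i\<close>-th summand of the repair sum
  \<open>\<Sum>i\<in>I. (-1)^(\<sigma> i + ind I i) * [F \<Xi>] i (I - {i})\<close>.\<close>
definition exchange_coeff :: "(nat \<Rightarrow> int) \<Rightarrow> (nat \<Rightarrow> 'a::field) \<Rightarrow> nat set \<Rightarrow> nat \<Rightarrow> nat \<Rightarrow> 'a" where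
  "exchange_coeff \<sigma> \<psi> I i y =
     signpow (\<sigma> i + int (ind I i)) * signpow (\<sigma> y + int (ind (insert y (I - {i})) y)) * \<psi> y"

definition exchange_sum :: "(nat \<Rightarrow> int) \<Rightarrow> (nat \<Rightarrow> 'a::field) \<Rightarrow> (nat \<Rightarrow> nat set \<Rightarrow> 'a)
    \<Rightarrow> nat set \<Rightarrow> nat \<Rightarrow> 'a" where
  "exchange_sum \<sigma> \<psi> F I y = (\<Sum>i\<in>I. exchange_coeff \<sigma> \<psi> I i y * F i (insert y (I - {i})))"

lemma exchange_sum_add:
  "exchange_sum \<sigma> \<psi> (\<lambda>i K. F i K + G i K) I y = exchange_sum \<sigma> \<psi> F I y + exchange_sum \<sigma> \<psi> G I y"
  unfolding exchange_sum_def by (simp add: distrib_left sum.distrib)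

lemma repair_sum_split:
  assumes I: "I \<in> ksubsets d m"
  shows "(\<Sum>i\<in>I. signpow (\<sigma> i + int (ind I i)) * matmul_sub d m F (repair_enc \<sigma> \<psi>) i (I - {i}))
    = (\<Sum>i\<in>I. \<psi> i * F i I) + (\<Sum>y\<in>{1..d} - I. exchange_sum \<sigma> \<psi> F I y)"
proof -
  have Isub: "I \<subseteq> {1..d}" and finI: "finite I" and cardI: "card I = m"
    using I finite_subset by (auto simp: ksubsets_def)
  have row: "signpow (\<sigma> i + int (ind I i)) * matmul_sub d m F (repair_enc \<sigma> \<psi>) i (I - {i})
      = \<psi> i * F i I + (\<Sum>y\<in>{1..d} - I. exchange_coeff \<sigma> \<psi> I i y * F i (insert y (I - {i})))"
    if i: "i \<in> I" for i
  proof -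
    have J: "I - {i} \<subseteq> {1..d}" "card (I - {i}) + 1 = m"
      using Isub finI i cardI by (auto simp: card_gt_0_iff) (metis Suc_pred card_gt_0_iff emptyE)
    have split: "{1..d} - (I - {i}) = insert i ({1..d} - I)" using i Isub by auto
    have "signpow (\<sigma> i + int (ind I i)) * matmul_sub d m F (repair_enc \<sigma> \<psi>) i (I - {i})
        = (\<Sum>y\<in>insert i ({1..d} - I). exchange_coeff \<sigma> \<psi> I i y * F i (insert y (I - {i})))"
      unfolding matmul_sub_repair_enc[OF J] split exchange_coeff_def
      by (simp add: sum_distrib_left ac_simps)
    also have "\<dots> = exchange_coeff \<sigma> \<psi> I i i * F i I
        + (\<Sum>y\<in>{1..d} - I. exchange_coeff \<sigma> \<psi> I i y * F i (insert y (I - {i})))"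
      using i finI by (simp add: insert_absorb)
    also have "exchange_coeff \<sigma> \<psi> I i i = \<psi> i"
      using i unfolding exchange_coeff_def by (simp add: insert_absorb)
    finally show ?thesis by (simp add: ac_simps)
  qed
  have "(\<Sum>i\<in>I. signpow (\<sigma> i + int (ind I i)) * matmul_sub d m F (repair_enc \<sigma> \<psi>) i (I - {i}))
      = (\<Sum>i\<in>I. \<psi> i * F i I)
        + (\<Sum>i\<in>I. \<Sum>y\<in>{1..d} - I. exchange_coeff \<sigma> \<psi> I i y * F i (insert y (I - {i})))"
    by (simp add: row sum.distrib)
  then show ?thesis unfolding exchange_sum_def by (simp add: sum.swap[of _ I])
qed

lemma insert_Diff_ksubsets:
  assumes "I \<in> ksubsets d m" "i \<in> I" "y \<in> {1..d} - I"
  shows "insert y (I - {i}) \<in> ksubsets d m"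
proof -
  have "finite I" using assms(1) finite_subset by (auto simp: ksubsets_def)
  moreover have "card I > 0" using \<open>finite I\<close> assms(2) card_gt_0_iff by blast
  ultimately have "card (insert y (I - {i})) = card I" using assms(2,3) by simp
  then show ?thesis using assms by (auto simp: ksubsets_def)
qed

lemma sdmm_exchange_sum:
  assumes Q: "sdmm d m \<sigma> Q" and I: "I \<in> ksubsets d m" and y: "y \<in> {1..d} - I"
  shows "exchange_sum \<sigma> \<psi> Q I y = \<psi> y * Q y I"
proof -
  obtain v w :: "nat \<Rightarrow> nat set \<Rightarrow> 'a" where
    alt: "\<forall>Y\<in>ksubsets d (m + 1). (\<Sum>y\<in>Y. signpow (int (ind Y y)) * w y Y) = 0" and
    Qdef: "\<forall>x\<in>{1..d}. \<forall>I\<in>ksubsets d m. Q x I = (if x \<in> I then signpow (\<sigma> x) * v x I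
             else signpow (\<sigma> x) * w x (I \<union> {x}))"
    using Q unfolding sdmm_def by blast
  define Y where "Y = insert y I"
  have finI: "finite I" and Isub: "I \<subseteq> {1..d}" and yI: "y \<notin> I"
    using I y finite_subset by (auto simp: ksubsets_def)
  have "Y \<in> ksubsets d (m + 1)" using I y finI by (auto simp: Y_def ksubsets_def)
  then have "(\<Sum>z\<in>Y. signpow (int (ind Y z)) * w z Y) = 0" using alt by blast
  then have "signpow (int (ind Y y)) * w y Y + (\<Sum>i\<in>I. signpow (int (ind Y i)) * w i Y) = 0"
    using finI yI unfolding Y_def by simp
  then have alt_I: "(\<Sum>i\<in>I. signpow (int (ind Y i)) * w i Y) = - (signpow (int (ind Y y)) * w y Y)"
    by (simp add: eq_neg_iff_add_eq_0 add.commute)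
  have Qy: "Q y I = signpow (\<sigma> y) * w y Y"
    using Qdef y I yI unfolding Y_def by auto
  have exchange_term: "exchange_coeff \<sigma> \<psi> I i y * Q i (insert y (I - {i}))
      = - (signpow (\<sigma> y + int (ind Y y)) * \<psi> y) * (signpow (int (ind Y i)) * w i Y)"
    if i: "i \<in> I" for i
  proof -
    let ?K = "insert y (I - {i})"
    have "i \<notin> ?K" "?K \<union> {i} = Y" using i yI unfolding Y_def by auto
    moreover have "i \<in> {1..d}" using i Isub by auto
    ultimately have Q_iK: "Q i ?K = signpow (\<sigma> i) * w i Y"
      using Qdef insert_Diff_ksubsets[OF I i y] by simp
    have "odd (int (ind I i) + int (ind ?K y) + int (ind Y y) + int (ind Y i))"
      using odd_ind_exchange[OF finI i yI] unfolding Y_def by simp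
    then have sign: "(signpow (\<sigma> i + int (ind I i) + (\<sigma> y + int (ind ?K y)) + \<sigma> i) :: 'a)
        = - signpow (\<sigma> y + int (ind Y y) + int (ind Y i))"
      by (intro signpow_eq_neg_if_odd_diff) presburger
    have "exchange_coeff \<sigma> \<psi> I i y * Q i ?K
        = signpow (\<sigma> i + int (ind I i) + (\<sigma> y + int (ind ?K y)) + \<sigma> i) * (\<psi> y * w i Y)"
      unfolding exchange_coeff_def Q_iK signpow_add by (simp only: mult_ac)
    also have "\<dots> = - (signpow (\<sigma> y + int (ind Y y)) * \<psi> y) * (signpow (int (ind Y i)) * w i Y)"
      unfolding sign by (simp add: signpow_add ac_simps)
    finally show ?thesis .
  qed
  have "exchange_sum \<sigma> \<psi> Q I y
      = - (signpow (\<sigma> y + int (ind Y y)) * \<psi> y) * (\<Sum>i\<in>I. signpow (int (ind Y i)) * w i Y)"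
    unfolding exchange_sum_def by (simp add: exchange_term sum_distrib_left)
  also have "\<dots> = \<psi> y * Q y I"
    unfolding alt_I Qy signpow_add by (simp add: ac_simps)
  finally show ?thesis .
qed

lemma injection_eq_0:
  "\<not> ((\<forall>a\<in>I. a < i) \<and> i \<notin> B \<and> I \<inter> B = {}) \<Longrightarrow> injection \<sigma>P P x B i I = 0"
  unfolding injection_def by (rule if_not_P)

lemma exchange_sum_injection_eq_0:
  assumes "y \<in> B \<or> I \<inter> B \<noteq> {}"
  shows "exchange_sum \<sigma> \<psi> (injection \<sigma>P P x B) I y = 0"
  unfolding exchange_sum_def
proof (intro sum.neutral ballI)
  fix i assume "i \<in> I"
  with assms have "i \<in> B \<or> insert y (I - {i}) \<inter> B \<noteq> {}" by blast
  then show "exchange_coeff \<sigma> \<psi> I i y * injection \<sigma>P P x B i (insert y (I - {i})) = 0"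
    using injection_eq_0 by (metis mult_zero_right)
qed

lemma exchange_sum_injection_above:
  assumes "\<forall>a\<in>I. a < y"
  shows "exchange_sum \<sigma> \<psi> (injection \<sigma>P P x B) I y = 0"
  unfolding exchange_sum_def
proof (intro sum.neutral ballI)
  fix i assume "i \<in> I"
  then have "y \<in> insert y (I - {i})" "\<not> y < i" using assms by auto
  then have "injection \<sigma>P P x B i (insert y (I - {i})) = 0" by (blast intro: injection_eq_0)
  then show "exchange_coeff \<sigma> \<psi> I i y * injection \<sigma>P P x B i (insert y (I - {i})) = 0" by simp
qed

text \<open>If \<open>y\<close> lies below the largest element \<open>i\<^sub>0\<close> of \<open>I\<close>, only the exchange of
  \<open>i\<^sub>0\<close> for \<open>y\<close> can hit a nonzero entry of the injection matrix, since that matrix is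
  supported on columns below the row index.\<close>
lemma exchange_sum_injection_below:
  assumes finI: "finite I" and finB: "finite B" and disj: "I \<inter> B = {}"
    and y: "y \<notin> I" "y \<notin> B" and a: "a \<in> I" "y < a"
    and \<sigma>Q: "\<And>i. \<sigma>Q i = 1 + \<sigma>P i + int (ind (B \<union> {i}) i)"
  defines "Z \<equiv> insert y (I \<union> B)"
  shows "exchange_sum \<sigma>Q \<psi> (injection \<sigma>P P x B) I y
    = P x Z * (signpow (\<sigma>P y + int (ind Z y)) * \<psi> y)"
proof -
  define i0 where "i0 = Max I"
  define K where "K = insert y (I - {i0})"
  have i0I: "i0 \<in> I" and i0_max: "\<forall>b\<in>I. b \<le> i0"
    using a finI unfolding i0_def by (auto intro: Max_in)
  have y_i0: "y < i0" using a i0_max by (meson order.strict_trans2)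
  have i0B: "i0 \<notin> B" using disj i0I by blast
  have others: "injection \<sigma>P P x B i (insert y (I - {i})) = 0" if i: "i \<in> I - {i0}" for i
  proof (rule injection_eq_0)
    have "i0 \<in> insert y (I - {i})" "\<not> i0 < i" using i i0I i0_max by auto
    then show "\<not> ((\<forall>b\<in>insert y (I - {i}). b < i) \<and> i \<notin> B \<and> insert y (I - {i}) \<inter> B = {})"
      by blast
  qed
  have "exchange_sum \<sigma>Q \<psi> (injection \<sigma>P P x B) I y
      = exchange_coeff \<sigma>Q \<psi> I i0 y * injection \<sigma>P P x B i0 K"
    unfolding exchange_sum_def K_def
    by (subst sum.remove[OF finI i0I]) (simp add: others)
  also have "injection \<sigma>P P x B i0 K = signpow (1 + \<sigma>P i0 + int (ind Z i0)) * P x Z"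
  proof -
    have "\<forall>b\<in>K. b < i0"
      using y_i0 i0_max unfolding K_def by (auto simp: order.order_iff_strict)
    moreover have "K \<inter> B = {}" using disj y unfolding K_def by auto
    moreover have "K \<union> {i0} \<union> B = Z" using i0I unfolding K_def Z_def by auto
    ultimately show ?thesis using i0B unfolding injection_def by simp
  qed
  also have "exchange_coeff \<sigma>Q \<psi> I i0 y * (signpow (1 + \<sigma>P i0 + int (ind Z i0)) * P x Z)
      = signpow (\<sigma>Q i0 + int (ind I i0) + (\<sigma>Q y + int (ind K y)) + (1 + \<sigma>P i0 + int (ind Z i0)))
        * (P x Z * \<psi> y)"
    unfolding exchange_coeff_def K_def signpow_add by (simp only: mult_ac)
  also have "signpow (\<sigma>Q i0 + int (ind I i0) + (\<sigma>Q y + int (ind K y)) + (1 + \<sigma>P i0 + int (ind Z i0)))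
      = (signpow (\<sigma>P y + int (ind Z y)) :: 'a)"
  proof (rule signpow_eq_if_even_diff)
    have finIB: "finite (I \<union> B)" and yIB: "y \<notin> I \<union> B" and fin': "finite (I - {i0})"
      using finI finB y by auto
    have I_i0: "ind I i0 = card I" using ind_eq_card i0_max by blast
    have I_y: "ind I y = ind (I - {i0}) y"
      using ind_insert[OF fin', of i0 y] i0I y_i0 by (simp add: insert_absorb)
    have K_y: "ind K y = ind I y + 1"
      using ind_insert[OF fin', of y y] y I_y unfolding K_def by simp
    have Z_i0: "ind Z i0 = card I + ind B i0 + 1"
      using ind_insert[OF finIB yIB, of i0] ind_Un_disjoint[OF finI finB disj, of i0] I_i0 y_i0
      unfolding Z_def by simp
    have Z_y: "ind Z y = ind I y + ind B y + 1"
      using ind_insert[OF finIB yIB, of y] ind_Un_disjoint[OF finI finB disj, of y]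
      unfolding Z_def by simp
    have B_i0: "ind (B \<union> {i0}) i0 = ind B i0 + 1" using ind_insert[OF finB i0B, of i0] by simp
    have B_y: "ind (B \<union> {y}) y = ind B y + 1" using ind_insert[OF finB y(2), of y] by simp
    have diff: "\<sigma>Q i0 + int (ind I i0) + (\<sigma>Q y + int (ind K y)) + (1 + \<sigma>P i0 + int (ind Z i0))
        - (\<sigma>P y + int (ind Z y)) = 2 * (\<sigma>P i0 + int (ind B i0) + int (card I) + 3)"
      unfolding \<sigma>Q I_i0 K_y Z_i0 Z_y B_i0 B_y by simp
    show "even (\<sigma>Q i0 + int (ind I i0) + (\<sigma>Q y + int (ind K y)) + (1 + \<sigma>P i0 + int (ind Z i0))
        - (\<sigma>P y + int (ind Z y)))"
      unfolding diff by simp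
  qed
  finally show ?thesis by (simp add: ac_simps)
qed

lemma exchange_sum_injection_minus:
  assumes finI: "finite I" and finB: "finite B" and disj: "I \<inter> B = {}"
    and y: "y \<notin> I" "y \<notin> B"
    and \<sigma>Q: "\<And>i. \<sigma>Q i = 1 + \<sigma>P i + int (ind (B \<union> {i}) i)"
  shows "exchange_sum \<sigma>Q \<psi> (injection \<sigma>P P x B) I y - \<psi> y * injection \<sigma>P P x B y I
    = P x (insert y (I \<union> B)) * (signpow (\<sigma>P y + int (ind (insert y (I \<union> B)) y)) * \<psi> y)"
    (is "_ = P x ?Z * (signpow ?e * \<psi> y)")
proof (cases "\<forall>a\<in>I. a < y")
  case True
  have "I \<union> {y} \<union> B = ?Z" by auto
  then have "injection \<sigma>P P x B y I = signpow (1 + ?e) * P x ?Z"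
    using True y disj unfolding injection_def by (simp add: add.assoc)
  moreover have "(signpow (1 + ?e) :: 'a) = - signpow ?e"
    by (rule signpow_eq_neg_if_odd_diff) simp
  ultimately show ?thesis
    using exchange_sum_injection_above[OF True] by (simp add: ac_simps)
next
  case False
  then obtain a where a: "a \<in> I" "y < a" using y by (metis le_neq_implies_less not_less)
  then have "\<not> a < y" by simp
  with a have "injection \<sigma>P P x B y I = 0" by (blast intro: injection_eq_0)
  then show ?thesis
    using exchange_sum_injection_below[OF finI finB disj y a \<sigma>Q] by simp
qed

lemma injection_row_sum:
  assumes I: "I \<subseteq> {1..d}" and B: "B \<subseteq> {1..d}" and card: "card I + card B + 1 = j"
    and \<sigma>Q: "\<And>i. \<sigma>Q i = 1 + \<sigma>P i + int (ind (B \<union> {i}) i)"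
  shows "(\<Sum>y\<in>{1..d} - I. exchange_sum \<sigma>Q \<psi> (injection \<sigma>P P x B) I y - \<psi> y * injection \<sigma>P P x B y I)
    = (if I \<inter> B = {} then matmul_sub d j P (repair_enc \<sigma>P \<psi>) x (I \<union> B) else 0)"
proof (cases "I \<inter> B = {}")
  case False
  then have "injection \<sigma>P P x B y I = 0" for y by (intro injection_eq_0) blast
  with False show ?thesis by (simp add: exchange_sum_injection_eq_0)
next
  case True
  have finI: "finite I" and finB: "finite B" using I B finite_subset by auto
  have "(\<Sum>y\<in>{1..d} - I. exchange_sum \<sigma>Q \<psi> (injection \<sigma>P P x B) I y - \<psi> y * injection \<sigma>P P x B y I)
      = (\<Sum>y\<in>{1..d} - (I \<union> B). exchange_sum \<sigma>Q \<psi> (injection \<sigma>P P x B) I y - \<psi> y * injection \<sigma>P P x B y I)"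
  proof (rule sum.mono_neutral_right)
    show "\<forall>y\<in>{1..d} - I - ({1..d} - (I \<union> B)).
        exchange_sum \<sigma>Q \<psi> (injection \<sigma>P P x B) I y - \<psi> y * injection \<sigma>P P x B y I = 0"
      by (auto simp: exchange_sum_injection_eq_0 injection_eq_0)
  qed auto
  also have "\<dots> = (\<Sum>y\<in>{1..d} - (I \<union> B).
      P x (insert y (I \<union> B)) * (signpow (\<sigma>P y + int (ind (insert y (I \<union> B)) y)) * \<psi> y))"
    by (rule sum.cong[OF refl], rule exchange_sum_injection_minus[OF finI finB True _ _ \<sigma>Q]) auto
  also have "\<dots> = matmul_sub d j P (repair_enc \<sigma>P \<psi>) x (I \<union> B)"
    using I B card card_Un_disjoint[OF finI finB True] by (simp add: matmul_sub_repair_enc)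
  finally show ?thesis using True by simp
qed

theorem proposition4:
  fixes d j m x :: nat
    and \<psi> :: "nat \<Rightarrow> 'a::field"
    and B :: "nat set"
    and \<sigma>P \<sigma>Q :: "nat \<Rightarrow> int"
    and P Q Qbar :: "nat \<Rightarrow> nat set \<Rightarrow> 'a"
  assumes "d \<ge> 1" and "j \<ge> 1"
    and "B \<subseteq> {1..d}" and "card B \<le> j - 1"
    and "m = j - card B - 1"
    and "x \<in> {1..d}"
    and "\<And>i. \<sigma>Q i = 1 + \<sigma>P i + int (ind (B \<union> {i}) i)"
    and "sdmm d m \<sigma>Q Q"
    and "Qbar = (\<lambda>i I. Q i I + injection \<sigma>P P x B i I)"
  shows "\<forall>I\<in>ksubsets d m.
    (\<Sum>y=1..d. \<psi> y * Qbar y I) =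
      (\<Sum>i\<in>I. signpow (\<sigma>Q i + int (ind I i)) *
                 matmul_sub d m Qbar (repair_enc \<sigma>Q \<psi>) i (I - {i}))
      - (if I \<inter> B = {} then matmul_sub d j P (repair_enc \<sigma>P \<psi>) x (I \<union> B) else 0)"
proof
  fix I assume I: "I \<in> ksubsets d m"
  define \<Delta> where "\<Delta> = injection \<sigma>P P x B"
  define X where "X = (if I \<inter> B = {} then matmul_sub d j P (repair_enc \<sigma>P \<psi>) x (I \<union> B) else 0)"
  have Isub: "I \<subseteq> {1..d}" and "card I + card B + 1 = j" using I assms(2,4,5) by (auto simp: ksubsets_def)
  then have row: "(\<Sum>y\<in>{1..d} - I. exchange_sum \<sigma>Q \<psi> \<Delta> I y - \<psi> y * \<Delta> y I) = X"
    unfolding \<Delta>_def X_def using injection_row_sum assms(3,7) by blast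
  have entry: "\<psi> y * Qbar y I = exchange_sum \<sigma>Q \<psi> Qbar I y - (exchange_sum \<sigma>Q \<psi> \<Delta> I y - \<psi> y * \<Delta> y I)"
    if "y \<in> {1..d} - I" for y
    using sdmm_exchange_sum[OF assms(8) I that] unfolding assms(9) \<Delta>_def exchange_sum_add
    by (simp add: algebra_simps)
  have "(\<Sum>y\<in>{1..d} - I. \<psi> y * Qbar y I)
      = (\<Sum>y\<in>{1..d} - I. exchange_sum \<sigma>Q \<psi> Qbar I y - (exchange_sum \<sigma>Q \<psi> \<Delta> I y - \<psi> y * \<Delta> y I))"
    using entry by (rule sum.cong[OF refl])
  also have "\<dots> = (\<Sum>y\<in>{1..d} - I. exchange_sum \<sigma>Q \<psi> Qbar I y) - X"
    unfolding row[symmetric] by (rule sum_subtractf)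
  moreover have "(\<Sum>y=1..d. \<psi> y * Qbar y I) = (\<Sum>i\<in>I. \<psi> i * Qbar i I) + (\<Sum>y\<in>{1..d} - I. \<psi> y * Qbar y I)"
    using sum.subset_diff[OF Isub] by (simp add: add.commute)
  ultimately show "(\<Sum>y=1..d. \<psi> y * Qbar y I) =
      (\<Sum>i\<in>I. signpow (\<sigma>Q i + int (ind I i)) * matmul_sub d m Qbar (repair_enc \<sigma>Q \<psi>) i (I - {i})) - X"
    unfolding repair_sum_split[OF I] by simp
qed

end
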